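(* A Boolean set $p\colon X\to B$ has binary meets (i.e. $x\wedge y$ exists in $(X,\le)$ for all $x,y$) if and only if the total space $X^{\ast}$ of its dual étalé space $\widetilde p\colon X^{\ast}\to B^{\ast}$ is Hausdorff.
   Context: Convention: a "Boolean algebra" means a generalized Boolean algebra (relatively complemented distributive lattice with $0$). Boolean set: a presheaf of sets $p\colon X\to B$ over a Boolean algebra $B$ (pairwise disjoint $X_e$, restriction maps $x\mapsto x|^e_f$ for $e\ge f$ with $|^e_e=\mathrm{id}$, $(x|^e_f)|^f_g=x|^e_g$) with all $X_e\ne\emptyset$, such that under the order $x\le y$ iff $p(x)\le p(y)$ and $x=y|^{p(y)}_{p(x)}$ there is a least element $0$, compatible pairs ($x\wedge y$ exists and $p(x\wedge y)=p(x)\wedge p(y)$) have joins, and $p(x)=0\Rightarrow x=0$. Dual étalé space: $X^{\ast}$ is the set of ultrafilters (maximal proper non-empty down-directed upward-closed subsets) of $(X,\le)$ with topology generated by $L(a)=\{G\in X^{\ast}: a\in G\}$, $a\in X$; $B^{\ast}$ the set of ultrafilters of $B$ with basis $M(b)=\{F: b\in F\}$; $\widetilde p(G)=p(G)$. *)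

theory Defs
  imports "HOL-Analysis.Analysis"
begin

definition gen_boolean_algebra :: "'b::{distrib_lattice,bounded_lattice_bot} itself \<Rightarrow> bool" where
  "gen_boolean_algebra _ \<longleftrightarrow>
     (\<forall>a b c::'b. a \<le> b \<and> b \<le> c \<longrightarrow> (\<exists>d. inf b d = a \<and> sup b d = c))"

text \<open>Presheaf data: carrier X, projection p, restriction maps res e f x = x|^e_f.\<close>
definition bleq :: "('x \<Rightarrow> 'b::order) \<Rightarrow> ('b \<Rightarrow> 'b \<Rightarrow> 'x \<Rightarrow> 'x) \<Rightarrow> 'x \<Rightarrow> 'x \<Rightarrow> bool" where
  "bleq p res x y \<longleftrightarrow> p x \<le> p y \<and> x = res (p y) (p x) y"

definition is_meet :: "'x set \<Rightarrow> ('x \<Rightarrow> 'x \<Rightarrow> bool) \<Rightarrow> 'x \<Rightarrow> 'x \<Rightarrow> 'x \<Rightarrow> bool" where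
  "is_meet X le x y m \<longleftrightarrow> m \<in> X \<and> le m x \<and> le m y \<and>
     (\<forall>z\<in>X. le z x \<and> le z y \<longrightarrow> le z m)"

definition is_join :: "'x set \<Rightarrow> ('x \<Rightarrow> 'x \<Rightarrow> bool) \<Rightarrow> 'x \<Rightarrow> 'x \<Rightarrow> 'x \<Rightarrow> bool" where
  "is_join X le x y j \<longleftrightarrow> j \<in> X \<and> le x j \<and> le y j \<and>
     (\<forall>z\<in>X. le x z \<and> le y z \<longrightarrow> le j z)"

definition is_least :: "'x set \<Rightarrow> ('x \<Rightarrow> 'x \<Rightarrow> bool) \<Rightarrow> 'x \<Rightarrow> bool" where
  "is_least X le z \<longleftrightarrow> z \<in> X \<and> (\<forall>x\<in>X. le z x)"

definition boolean_set ::
  "'x set \<Rightarrow> ('x \<Rightarrow> 'b::{distrib_lattice,bounded_lattice_bot}) \<Rightarrow> ('b \<Rightarrow> 'b \<Rightarrow> 'x \<Rightarrow> 'x) \<Rightarrow> bool" where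
  "boolean_set X p res \<longleftrightarrow>
     gen_boolean_algebra TYPE('b) \<and>
     \<comment> \<open>presheaf over B with fibres X_e = {x \<in> X. p x = e}\<close>
     (\<forall>e f x. f \<le> e \<and> x \<in> X \<and> p x = e \<longrightarrow> res e f x \<in> X \<and> p (res e f x) = f) \<and>
     (\<forall>e x. x \<in> X \<and> p x = e \<longrightarrow> res e e x = x) \<and>
     (\<forall>e f g x. g \<le> f \<and> f \<le> e \<and> x \<in> X \<and> p x = e \<longrightarrow> res f g (res e f x) = res e g x) \<and>
     \<comment> \<open>all fibres nonempty\<close>
     (\<forall>e. \<exists>x\<in>X. p x = e) \<and>
     \<comment> \<open>least element\<close>
     (\<exists>z. is_least X (bleq p res) z) \<and>
     \<comment> \<open>compatible pairs have joins\<close>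
     (\<forall>x\<in>X. \<forall>y\<in>X. (\<exists>m. is_meet X (bleq p res) x y m \<and> p m = inf (p x) (p y))
         \<longrightarrow> (\<exists>j. is_join X (bleq p res) x y j)) \<and>
     \<comment> \<open>p x = 0 implies x = 0\<close>
     (\<forall>x\<in>X. p x = bot \<longrightarrow> is_least X (bleq p res) x)"

definition is_filter :: "'x set \<Rightarrow> ('x \<Rightarrow> 'x \<Rightarrow> bool) \<Rightarrow> 'x set \<Rightarrow> bool" where
  "is_filter X le F \<longleftrightarrow> F \<subseteq> X \<and> F \<noteq> {} \<and>
     (\<forall>a\<in>F. \<forall>b\<in>F. \<exists>c\<in>F. le c a \<and> le c b) \<and>
     (\<forall>a\<in>F. \<forall>b\<in>X. le a b \<longrightarrow> b \<in> F)"

definition is_ultrafilter :: "'x set \<Rightarrow> ('x \<Rightarrow> 'x \<Rightarrow> bool) \<Rightarrow> 'x set \<Rightarrow> bool" where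
  "is_ultrafilter X le F \<longleftrightarrow> is_filter X le F \<and> F \<noteq> X \<and>
     (\<forall>G. is_filter X le G \<and> G \<noteq> X \<and> F \<subseteq> G \<longrightarrow> G = F)"

definition dual_total_space :: "'x set \<Rightarrow> ('x \<Rightarrow> 'b::order) \<Rightarrow> ('b \<Rightarrow> 'b \<Rightarrow> 'x \<Rightarrow> 'x) \<Rightarrow> 'x set topology" where
  "dual_total_space X p res =
     topology_generated_by {{G. is_ultrafilter X (bleq p res) G \<and> a \<in> G} | a. a \<in> X}"

end

theory Submission
  imports Defs
begin

text \<open>If all binary meets exist, two distinct ultrafilters F and G together generate all of X,
  so some meet a \<sqinter> b with a \<in> F, b \<in> G lies over 0; then no ultrafilter contains both a and b,
  and L(a), L(b) separate F and G. Conversely, for x, y over the same e the set D of b \<le> e on which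
  x and y agree is an ideal (joins of compatible pairs glue). Prime filters of B through e give
  germs of x and y, which are points of X*; if the germs agree the filter meets D, and if they
  differ the Hausdorff property yields an element of the filter disjoint from every member of D.
  By the prime filter theorem this makes D principal, and restricting x to its generator gives the
  meet.\<close>

definition lattice_filter :: "'b::lattice set \<Rightarrow> bool" where
  "lattice_filter F \<longleftrightarrow> (\<forall>a\<in>F. \<forall>b. a \<le> b \<longrightarrow> b \<in> F) \<and> (\<forall>a\<in>F. \<forall>b\<in>F. inf a b \<in> F)"

definition prime_filter :: "'b::{distrib_lattice,bounded_lattice_bot} set \<Rightarrow> bool" where
  "prime_filter F \<longleftrightarrow> lattice_filter F \<and> bot \<notin> F \<and> (\<forall>a b. sup a b \<in> F \<longrightarrow> a \<in> F \<or> b \<in> F)"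

lemma prime_filterD:
  assumes "prime_filter F"
  shows prime_filter_upward: "a \<in> F \<Longrightarrow> a \<le> b \<Longrightarrow> b \<in> F"
    and prime_filter_inf: "a \<in> F \<Longrightarrow> b \<in> F \<Longrightarrow> inf a b \<in> F"
    and prime_filter_bot: "bot \<notin> F"
    and prime_filter_prime: "sup a b \<in> F \<Longrightarrow> a \<in> F \<or> b \<in> F"
  using assms unfolding prime_filter_def lattice_filter_def by blast+

lemma ex_maximal_lattice_filter_disjoint:
  fixes I :: "'b::lattice set"
  assumes down: "\<And>c c'. c \<in> I \<Longrightarrow> c' \<le> c \<Longrightarrow> c' \<in> I" and "e \<notin> I"
  obtains M where "lattice_filter M" "e \<in> M" "M \<inter> I = {}"
    and "\<And>Y. lattice_filter Y \<Longrightarrow> e \<in> Y \<Longrightarrow> Y \<inter> I = {} \<Longrightarrow> M \<subseteq> Y \<Longrightarrow> Y = M"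
proof -
  define A where "A = {F. lattice_filter F \<and> e \<in> F \<and> F \<inter> I = {}}"
  have "{c. e \<le> c} \<in> A"
    using assms unfolding A_def lattice_filter_def by (auto intro: le_infI1)
  then have "A \<noteq> {}" by blast
  then have "\<exists>M\<in>A. \<forall>Y\<in>A. M \<subseteq> Y \<longrightarrow> Y = M"
  proof (rule subset_Zorn_nonempty)
    fix C assume "C \<noteq> {}" and "subset.chain A C"
    then have CA: "C \<subseteq> A" and tot: "\<And>x y. x \<in> C \<Longrightarrow> y \<in> C \<Longrightarrow> x \<subseteq> y \<or> y \<subseteq> x"
      unfolding subset.chain_def by auto
    have "lattice_filter (\<Union>C)" unfolding lattice_filter_def
    proof (intro conjI ballI allI impI)
      fix a b assume "a \<in> \<Union>C" "b \<in> \<Union>C"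
      then obtain F1 F2 where "F1 \<in> C" "F2 \<in> C" "a \<in> F1" "b \<in> F2" by blast
      then show "inf a b \<in> \<Union>C" using tot[of F1 F2] CA unfolding A_def lattice_filter_def by blast
    next
      fix a b assume "a \<in> \<Union>C" "a \<le> b"
      then show "b \<in> \<Union>C" using CA unfolding A_def lattice_filter_def by blast
    qed
    then show "\<Union>C \<in> A" using \<open>C \<noteq> {}\<close> CA unfolding A_def by blast
  qed
  then obtain M where "M \<in> A" and "\<And>Y. Y \<in> A \<Longrightarrow> M \<subseteq> Y \<Longrightarrow> Y = M" by blast
  then show ?thesis using that[of M] unfolding A_def by simp
qed

text \<open>The prime filter theorem: a maximal filter avoiding an ideal is prime, because a b outside
  it generates together with it a filter meeting the ideal.\<close>
lemma prime_filter_separation: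
  fixes I :: "'b::{distrib_lattice,bounded_lattice_bot} set"
  assumes down: "\<And>c c'. c \<in> I \<Longrightarrow> c' \<le> c \<Longrightarrow> c' \<in> I"
    and sup_closed: "\<And>c c'. c \<in> I \<Longrightarrow> c' \<in> I \<Longrightarrow> sup c c' \<in> I"
    and bot_in: "bot \<in> I" and e_notin: "e \<notin> I"
  obtains F where "prime_filter F" "e \<in> F" "F \<inter> I = {}"
proof -
  obtain M where M: "lattice_filter M" "e \<in> M" and disjoint: "M \<inter> I = {}"
    and maximal: "\<And>Y. lattice_filter Y \<Longrightarrow> e \<in> Y \<Longrightarrow> Y \<inter> I = {} \<Longrightarrow> M \<subseteq> Y \<Longrightarrow> Y = M"
  proof (rule ex_maximal_lattice_filter_disjoint[where I = I and e = e])
    show "\<And>c c'. c \<in> I \<Longrightarrow> c' \<le> c \<Longrightarrow> c' \<in> I" by (rule down)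
  qed (use e_notin in blast)+
  have inf_closed: "\<And>a b. a \<in> M \<Longrightarrow> b \<in> M \<Longrightarrow> inf a b \<in> M"
    using M(1) unfolding lattice_filter_def by blast
  have meets_I: "\<exists>m\<in>M. inf m b \<in> I" if "b \<notin> M" for b
  proof (rule ccontr)
    assume none: "\<not> (\<exists>m\<in>M. inf m b \<in> I)"
    define M' where "M' = {c. \<exists>m\<in>M. inf m b \<le> c}"
    have "lattice_filter M'" unfolding lattice_filter_def
    proof (intro conjI ballI allI impI)
      fix a c assume "a \<in> M'" "a \<le> c" then show "c \<in> M'" unfolding M'_def using order_trans by blast
    next
      fix a c assume "a \<in> M'" "c \<in> M'"
      then obtain m1 m2 where "m1 \<in> M" "m2 \<in> M" "inf m1 b \<le> a" "inf m2 b \<le> c"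
        unfolding M'_def by blast
      moreover from this have "inf (inf m1 m2) b \<le> inf a c"
        by (meson inf.bounded_iff inf_le1 inf_le2 order_trans)
      ultimately show "inf a c \<in> M'" unfolding M'_def using inf_closed by blast
    qed
    moreover have "M' \<inter> I = {}" unfolding M'_def using none down by blast
    moreover have "M \<subseteq> M'" "b \<in> M'" unfolding M'_def using M(2) by (auto intro: le_infI1)
    ultimately show False using maximal M(2) that by blast
  qed
  have "sup a b \<in> M \<Longrightarrow> a \<in> M \<or> b \<in> M" for a b
  proof (rule ccontr)
    assume "sup a b \<in> M" "\<not> (a \<in> M \<or> b \<in> M)"
    then obtain m1 m2 where m: "m1 \<in> M" "m2 \<in> M" "inf m1 a \<in> I" "inf m2 b \<in> I"
      using meets_I by blast
    have "inf (inf m1 m2) (sup a b) = sup (inf (inf m1 m2) a) (inf (inf m1 m2) b)"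
      by (rule inf_sup_distrib1)
    also have "\<dots> \<le> sup (inf m1 a) (inf m2 b)"
      by (meson inf_le1 inf_le2 inf_mono order_trans sup_mono order_refl)
    finally have "inf (inf m1 m2) (sup a b) \<in> I" using sup_closed[OF m(3,4)] down by blast
    moreover have "inf (inf m1 m2) (sup a b) \<in> M" using inf_closed m \<open>sup a b \<in> M\<close> by blast
    ultimately show False using disjoint by blast
  qed
  moreover have "bot \<notin> M" using disjoint bot_in by blast
  ultimately have "prime_filter M" unfolding prime_filter_def using M(1) by simp
  then show ?thesis using that M(2) disjoint by blast
qed

lemma ex_prime_filter_containing:
  fixes g :: "'b::{distrib_lattice,bounded_lattice_bot}"
  assumes "g \<noteq> bot"
  obtains F where "prime_filter F" "g \<in> F"
  by (rule prime_filter_separation[of "{bot}" g]) (use assms that in \<open>auto simp: bot_unique\<close>)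

lemma le_sup_disjoint_imp_le:
  fixes b d j :: "'b::{distrib_lattice,bounded_lattice_bot}"
  assumes "b \<le> sup d j" and "inf b j = bot"
  shows "b \<le> d"
proof -
  have "b = inf b (sup d j)" using assms(1) by (simp add: inf.absorb1)
  also have "\<dots> = sup (inf b d) (inf b j)" by (rule inf_sup_distrib1)
  also have "\<dots> = inf b d" using assms(2) by simp
  finally show ?thesis by (metis inf.cobounded2)
qed

lemma is_filterD:
  assumes "is_filter X le F"
  shows is_filter_subset: "F \<subseteq> X"
    and is_filter_nonempty: "F \<noteq> {}"
    and is_filter_directed: "a \<in> F \<Longrightarrow> b \<in> F \<Longrightarrow> \<exists>c\<in>F. le c a \<and> le c b"
    and is_filter_upward: "a \<in> F \<Longrightarrow> b \<in> X \<Longrightarrow> le a b \<Longrightarrow> b \<in> F"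
  using assms unfolding is_filter_def by blast+

lemma is_ultrafilterD:
  assumes "is_ultrafilter X le F"
  shows is_ultrafilter_filter: "is_filter X le F"
    and is_ultrafilter_proper: "F \<noteq> X"
    and is_ultrafilter_maximal: "is_filter X le G \<Longrightarrow> G \<noteq> X \<Longrightarrow> F \<subseteq> G \<Longrightarrow> G = F"
  using assms unfolding is_ultrafilter_def by blast+

locale bool_set =
  fixes X :: "'x set" and p :: "'x \<Rightarrow> 'b::{distrib_lattice,bounded_lattice_bot}"
    and res :: "'b \<Rightarrow> 'b \<Rightarrow> 'x \<Rightarrow> 'x"
  assumes boolean_set: "boolean_set X p res"
begin

abbreviation below :: "'x \<Rightarrow> 'x \<Rightarrow> bool" (infix "\<sqsubseteq>" 50)
  where "x \<sqsubseteq> y \<equiv> bleq p res x y"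

abbreviation restr :: "'x \<Rightarrow> 'b \<Rightarrow> 'x"
  where "restr x f \<equiv> res (p x) f x"

abbreviation ultra :: "'x set \<Rightarrow> bool"
  where "ultra G \<equiv> is_ultrafilter X (\<sqsubseteq>) G"

lemma relative_complement: "(b::'b) \<le> a \<Longrightarrow> \<exists>d. inf b d = bot \<and> sup b d = a"
proof -
  have "gen_boolean_algebra TYPE('b)"
    using boolean_set unfolding boolean_set_def by (elim conjE)
  then show "b \<le> a \<Longrightarrow> ?thesis"
    unfolding gen_boolean_algebra_def using bot.extremum by blast
qed

lemma restr_in: "x \<in> X \<Longrightarrow> f \<le> p x \<Longrightarrow> restr x f \<in> X"
  and p_restr: "x \<in> X \<Longrightarrow> f \<le> p x \<Longrightarrow> p (restr x f) = f"
proof -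
  have "\<forall>e f x. f \<le> e \<and> x \<in> X \<and> p x = e \<longrightarrow> res e f x \<in> X \<and> p (res e f x) = f"
    using boolean_set unfolding boolean_set_def by (elim conjE)
  then show "x \<in> X \<Longrightarrow> f \<le> p x \<Longrightarrow> restr x f \<in> X" "x \<in> X \<Longrightarrow> f \<le> p x \<Longrightarrow> p (restr x f) = f"
    by simp_all
qed

lemma restr_self: "x \<in> X \<Longrightarrow> restr x (p x) = x"
  using boolean_set unfolding boolean_set_def by (elim conjE) simp

lemma restr_restr: "x \<in> X \<Longrightarrow> g \<le> f \<Longrightarrow> f \<le> p x \<Longrightarrow> restr (restr x f) g = restr x g"
  using boolean_set p_restr unfolding boolean_set_def by (elim conjE) simp

lemma fibre_nonempty: "\<exists>x\<in>X. p x = e"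
  using boolean_set unfolding boolean_set_def by (elim conjE) simp

lemma bot_fibre_least: "x \<in> X \<Longrightarrow> p x = bot \<Longrightarrow> w \<in> X \<Longrightarrow> x \<sqsubseteq> w"
  using boolean_set unfolding boolean_set_def is_least_def by (elim conjE) simp

lemma compatible_join:
  "x \<in> X \<Longrightarrow> y \<in> X \<Longrightarrow> is_meet X (\<sqsubseteq>) x y m \<Longrightarrow> p m = inf (p x) (p y) \<Longrightarrow>
    \<exists>j. is_join X (\<sqsubseteq>) x y j"
  using boolean_set unfolding boolean_set_def by (elim conjE) blast

lemma bleq_iff: "x \<sqsubseteq> y \<longleftrightarrow> p x \<le> p y \<and> x = restr y (p x)"
  unfolding bleq_def ..

lemma bleq_p: "x \<sqsubseteq> y \<Longrightarrow> p x \<le> p y"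
  unfolding bleq_def by simp

lemma bleq_refl: "x \<in> X \<Longrightarrow> x \<sqsubseteq> x"
  unfolding bleq_def using restr_self by simp

lemma bleq_trans: "x \<sqsubseteq> y \<Longrightarrow> y \<sqsubseteq> z \<Longrightarrow> z \<in> X \<Longrightarrow> x \<sqsubseteq> z"
  unfolding bleq_def using restr_restr[of z "p x" "p y"] by auto

lemma bleq_antisym: "x \<sqsubseteq> y \<Longrightarrow> y \<sqsubseteq> x \<Longrightarrow> y \<in> X \<Longrightarrow> x = y"
  unfolding bleq_def using restr_self[of y] by auto

lemma restr_bleq: "x \<in> X \<Longrightarrow> f \<le> p x \<Longrightarrow> restr x f \<sqsubseteq> x"
  unfolding bleq_def using p_restr by simp

lemma restr_mono: "x \<in> X \<Longrightarrow> g \<le> f \<Longrightarrow> f \<le> p x \<Longrightarrow> restr x g \<sqsubseteq> restr x f"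
  unfolding bleq_def using p_restr restr_restr by (simp add: order_trans)

lemma ultrafilter_not_bot: "ultra G \<Longrightarrow> c \<in> G \<Longrightarrow> p c \<noteq> bot"
proof
  assume "ultra G" "c \<in> G" "p c = bot"
  then have "X \<subseteq> G"
    using bot_fibre_least is_filter_upward[OF is_ultrafilter_filter] is_filter_subset[OF is_ultrafilter_filter]
    by (metis subsetI subsetD)
  with \<open>ultra G\<close> show False
    using is_ultrafilter_proper is_filter_subset[OF is_ultrafilter_filter] by blast
qed

definition germ :: "'b set \<Rightarrow> 'x \<Rightarrow> 'x set" where
  "germ F x = {w\<in>X. \<exists>b\<in>F. b \<le> p x \<and> restr x b \<sqsubseteq> w}"

lemma restr_in_germ: "x \<in> X \<Longrightarrow> b \<in> F \<Longrightarrow> b \<le> p x \<Longrightarrow> restr x b \<in> germ F x"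
  unfolding germ_def using restr_in bleq_refl by blast

lemma self_in_germ: "x \<in> X \<Longrightarrow> p x \<in> F \<Longrightarrow> x \<in> germ F x"
  using restr_in_germ[of x "p x" F] restr_self by simp

lemma germ_is_filter:
  assumes F: "prime_filter F" and x: "x \<in> X" and px: "p x \<in> F"
  shows "is_filter X (\<sqsubseteq>) (germ F x)"
  unfolding is_filter_def
proof (intro conjI ballI allI impI)
  show "germ F x \<subseteq> X" unfolding germ_def by blast
  show "germ F x \<noteq> {}" using self_in_germ[OF x px] by blast
next
  fix a b assume "a \<in> germ F x" "b \<in> germ F x"
  then obtain f g where f: "f \<in> F" "f \<le> p x" "restr x f \<sqsubseteq> a" and g: "g \<in> F" "g \<le> p x" "restr x g \<sqsubseteq> b"
    and "a \<in> X" "b \<in> X" unfolding germ_def by blast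
  have "inf f g \<in> F" using prime_filter_inf[OF F f(1) g(1)] .
  then have "restr x (inf f g) \<in> germ F x" using restr_in_germ[OF x] f(2) le_infI1 by blast
  moreover have "restr x (inf f g) \<sqsubseteq> a"
    using bleq_trans[OF restr_mono[OF x _ f(2)] f(3) \<open>a \<in> X\<close>] by simp
  moreover have "restr x (inf f g) \<sqsubseteq> b"
    using bleq_trans[OF restr_mono[OF x _ g(2)] g(3) \<open>b \<in> X\<close>] by simp
  ultimately show "\<exists>c\<in>germ F x. c \<sqsubseteq> a \<and> c \<sqsubseteq> b" by blast
next
  fix a b assume "a \<in> germ F x" "b \<in> X" "a \<sqsubseteq> b"
  then show "b \<in> germ F x" unfolding germ_def using bleq_trans by blast
qed

text \<open>Every w in a proper filter H \<supseteq> germ F x lies above some restriction x|c in H. Splitting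
  p x = c \<squnion> d with c \<sqinter> d = 0, the alternative d \<in> F would put an element over 0 into H; so
  c \<in> F and w belongs to the germ.\<close>
lemma germ_maximal:
  assumes F: "prime_filter F" and x: "x \<in> X" and px: "p x \<in> F"
    and H: "is_filter X (\<sqsubseteq>) H" "H \<noteq> X" "germ F x \<subseteq> H"
  shows "H \<subseteq> germ F x"
proof
  fix w assume "w \<in> H"
  have "x \<in> H" using H(3) self_in_germ[OF x px] by blast
  with \<open>w \<in> H\<close> obtain c where c: "c \<in> H" "c \<sqsubseteq> x" "c \<sqsubseteq> w"
    using is_filter_directed[OF H(1)] by blast
  have "w \<in> X" using \<open>w \<in> H\<close> is_filter_subset[OF H(1)] by blast
  have pc: "p c \<le> p x" and c_restr: "c = restr x (p c)" using c(2) bleq_iff by auto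
  obtain d where d: "inf (p c) d = bot" "sup (p c) d = p x" using relative_complement[OF pc] by blast
  have "p c \<in> F \<or> d \<in> F" using prime_filter_prime[OF F] px d(2) by simp
  then show "w \<in> germ F x"
  proof
    assume "p c \<in> F"
    then show "w \<in> germ F x" unfolding germ_def using \<open>w \<in> X\<close> pc c(3) c_restr by auto
  next
    assume "d \<in> F"
    have "d \<le> p x" using d(2) sup.cobounded2 by metis
    then have "restr x d \<in> H" using restr_in_germ[OF x \<open>d \<in> F\<close>] H(3) by blast
    then obtain c' where c': "c' \<in> H" "c' \<sqsubseteq> c" "c' \<sqsubseteq> restr x d"
      using is_filter_directed[OF H(1) c(1)] by blast
    have "p c' \<le> inf (p c) d" using bleq_p[OF c'(2)] bleq_p[OF c'(3)] p_restr[OF x \<open>d \<le> p x\<close>] by simp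
    then have "p c' = bot" using d(1) by (simp add: bot_unique)
    moreover have "c' \<in> X" using c'(1) is_filter_subset[OF H(1)] by blast
    ultimately have "X \<subseteq> H" using bot_fibre_least is_filter_upward[OF H(1) c'(1)] by blast
    then show "w \<in> germ F x" using H(2) is_filter_subset[OF H(1)] by blast
  qed
qed

lemma germ_ultrafilter:
  assumes F: "prime_filter F" and x: "x \<in> X" and px: "p x \<in> F"
  shows "ultra (germ F x)"
proof -
  obtain z where z: "z \<in> X" "p z = bot" using fibre_nonempty by blast
  have "z \<notin> germ F x"
  proof
    assume "z \<in> germ F x"
    then obtain b where "b \<in> F" "b \<le> p x" "restr x b \<sqsubseteq> z" unfolding germ_def by blast
    then have "b = bot" using bleq_p p_restr[OF x] z(2) by (metis bot_unique)
    then show False using prime_filter_bot[OF F] \<open>b \<in> F\<close> by blast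
  qed
  then show ?thesis
    unfolding is_ultrafilter_def using germ_is_filter[OF assms] germ_maximal[OF assms] z(1) by blast
qed

definition L :: "'x \<Rightarrow> 'x set set" where
  "L a = {G. ultra G \<and> a \<in> G}"

abbreviation dual :: "'x set topology"
  where "dual \<equiv> dual_total_space X p res"

lemma dual_total_space_eq: "dual = topology_generated_by (L ` X)"
  unfolding dual_total_space_def L_def by (simp add: Setcompr_eq_image)

lemma L_mono: "a \<sqsubseteq> b \<Longrightarrow> b \<in> X \<Longrightarrow> L a \<subseteq> L b"
  unfolding L_def by (blast intro: is_filter_upward[OF is_ultrafilter_filter])

lemma topspace_dual: "topspace dual = {G. ultra G}"
proof -
  have "G \<noteq> {} \<and> G \<subseteq> X" if "ultra G" for G
    using is_filter_nonempty[OF is_ultrafilter_filter[OF that]]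
      is_filter_subset[OF is_ultrafilter_filter[OF that]] by simp
  then show ?thesis unfolding dual_total_space_eq L_def by auto
qed

lemma openin_L: "a \<in> X \<Longrightarrow> openin dual (L a)"
  unfolding dual_total_space_eq openin_topology_generated_by_iff
  by (rule generate_topology_on.Basis) blast

lemma openin_dual_basic:
  assumes "openin dual U" and "G \<in> U"
  shows "\<exists>a\<in>G. L a \<subseteq> U"
proof -
  have "generate_topology_on (L ` X) U"
    using assms(1) unfolding dual_total_space_eq openin_topology_generated_by_iff .
  then have "\<forall>G\<in>U. ultra G \<longrightarrow> (\<exists>a\<in>G. L a \<subseteq> U)"
  proof (induction rule: generate_topology_on.induct)
    case (Int U1 U2)
    show ?case
    proof (intro ballI impI)
      fix G assume G: "G \<in> U1 \<inter> U2" "ultra G"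
      obtain a1 a2 where a: "a1 \<in> G" "L a1 \<subseteq> U1" "a2 \<in> G" "L a2 \<subseteq> U2" using Int.IH G by blast
      obtain c where c: "c \<in> G" "c \<sqsubseteq> a1" "c \<sqsubseteq> a2"
        using is_filter_directed[OF is_ultrafilter_filter[OF G(2)] a(1,3)] by blast
      have "a1 \<in> X" "a2 \<in> X" using a(1,3) is_filter_subset[OF is_ultrafilter_filter[OF G(2)]] by blast+
      then have "L c \<subseteq> U1 \<inter> U2" using L_mono c(2,3) a(2,4) by blast
      then show "\<exists>a\<in>G. L a \<subseteq> U1 \<inter> U2" using c(1) by blast
    qed
  next
    case (UN K)
    then show ?case by blast
  qed (auto simp: L_def)
  moreover have "ultra G"
    using assms openin_subset topspace_dual by blast
  ultimately show ?thesis using assms(2) by blast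
qed

lemma Hausdorff_dual_iff:
  "Hausdorff_space dual \<longleftrightarrow>
     (\<forall>F G. ultra F \<longrightarrow> ultra G \<longrightarrow> F \<noteq> G \<longrightarrow> (\<exists>a\<in>F. \<exists>b\<in>G. L a \<inter> L b = {}))"
  (is "_ \<longleftrightarrow> ?basic")
proof
  assume "Hausdorff_space dual"
  show ?basic
  proof (intro allI impI)
    fix F G assume "ultra F" "ultra G" "F \<noteq> G"
    then obtain U V where UV: "openin dual U" "openin dual V" "F \<in> U" "G \<in> V" "disjnt U V"
      using \<open>Hausdorff_space dual\<close> unfolding Hausdorff_space_def topspace_dual by blast
    obtain a b where "a \<in> F" "L a \<subseteq> U" "b \<in> G" "L b \<subseteq> V"
      using openin_dual_basic[OF UV(1,3)] openin_dual_basic[OF UV(2,4)] by blast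
    then show "\<exists>a\<in>F. \<exists>b\<in>G. L a \<inter> L b = {}" using UV(5) unfolding disjnt_def by blast
  qed
next
  assume ?basic
  show "Hausdorff_space dual" unfolding Hausdorff_space_def topspace_dual
  proof (intro allI impI)
    fix F G assume "F \<in> {G. ultra G} \<and> G \<in> {G. ultra G} \<and> F \<noteq> G"
    then have F: "ultra F" and G: "ultra G" and "F \<noteq> G" by auto
    then obtain a b where "a \<in> F" "b \<in> G" and disj: "L a \<inter> L b = {}" using \<open>?basic\<close> by blast
    then have "F \<in> L a" "G \<in> L b" using F G unfolding L_def by auto
    moreover have "a \<in> X" "b \<in> X"
      using \<open>a \<in> F\<close> \<open>b \<in> G\<close> is_filter_subset[OF is_ultrafilter_filter[OF F]]
        is_filter_subset[OF is_ultrafilter_filter[OF G]] by blast+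
    ultimately show "\<exists>U V. openin dual U \<and> openin dual V \<and> F \<in> U \<and> G \<in> V \<and> disjnt U V"
      using openin_L disj unfolding disjnt_def by blast
  qed
qed

definition meet_filter :: "'x set \<Rightarrow> 'x set \<Rightarrow> 'x set" where
  "meet_filter F G = {w\<in>X. \<exists>a\<in>F. \<exists>b\<in>G. \<exists>m. is_meet X (\<sqsubseteq>) a b m \<and> m \<sqsubseteq> w}"

context
  assumes meets: "\<forall>x\<in>X. \<forall>y\<in>X. \<exists>m. is_meet X (\<sqsubseteq>) x y m"
begin

lemma subset_meet_filter:
  assumes F: "is_filter X (\<sqsubseteq>) F" and G: "is_filter X (\<sqsubseteq>) G"
  shows "F \<subseteq> meet_filter F G" and "G \<subseteq> meet_filter F G"
proof -
  have "a \<in> meet_filter F G" "b \<in> meet_filter F G" if "a \<in> F" "b \<in> G" for a b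
  proof -
    have "a \<in> X" "b \<in> X" using that is_filter_subset[OF F] is_filter_subset[OF G] by blast+
    then obtain m where "is_meet X (\<sqsubseteq>) a b m" using meets by blast
    then show "a \<in> meet_filter F G" "b \<in> meet_filter F G"
      unfolding meet_filter_def is_meet_def using that \<open>a \<in> X\<close> \<open>b \<in> X\<close> by blast+
  qed
  then show "F \<subseteq> meet_filter F G" "G \<subseteq> meet_filter F G"
    using is_filter_nonempty[OF F] is_filter_nonempty[OF G] by blast+
qed

lemma meet_filter_is_filter:
  assumes F: "is_filter X (\<sqsubseteq>) F" and G: "is_filter X (\<sqsubseteq>) G"
  shows "is_filter X (\<sqsubseteq>) (meet_filter F G)"
  unfolding is_filter_def
proof (intro conjI ballI allI impI)
  show "meet_filter F G \<subseteq> X" unfolding meet_filter_def by blast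
  show "meet_filter F G \<noteq> {}" using subset_meet_filter[OF F G] is_filter_nonempty[OF F] by blast
next
  fix w1 w2 assume "w1 \<in> meet_filter F G" "w2 \<in> meet_filter F G"
  then obtain a1 b1 m1 a2 b2 m2 where w: "w1 \<in> X" "a1 \<in> F" "b1 \<in> G" "is_meet X (\<sqsubseteq>) a1 b1 m1" "m1 \<sqsubseteq> w1"
    "w2 \<in> X" "a2 \<in> F" "b2 \<in> G" "is_meet X (\<sqsubseteq>) a2 b2 m2" "m2 \<sqsubseteq> w2"
    unfolding meet_filter_def by blast
  obtain c where c: "c \<in> F" "c \<sqsubseteq> a1" "c \<sqsubseteq> a2" using is_filter_directed[OF F w(2,7)] by blast
  obtain d where d: "d \<in> G" "d \<sqsubseteq> b1" "d \<sqsubseteq> b2" using is_filter_directed[OF G w(3,8)] by blast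
  have "c \<in> X" "d \<in> X" using c(1) d(1) is_filter_subset[OF F] is_filter_subset[OF G] by blast+
  then obtain n where n: "is_meet X (\<sqsubseteq>) c d n" using meets by blast
  then have nX: "n \<in> X" and "n \<sqsubseteq> c" "n \<sqsubseteq> d" unfolding is_meet_def by auto
  have below: "n \<sqsubseteq> w"
    if "a \<in> F" "b \<in> G" "is_meet X (\<sqsubseteq>) a b m" "m \<sqsubseteq> w" "w \<in> X" "c \<sqsubseteq> a" "d \<sqsubseteq> b" for a b m w
  proof -
    have "a \<in> X" "b \<in> X" using that(1,2) is_filter_subset[OF F] is_filter_subset[OF G] by blast+
    then have "n \<sqsubseteq> a" "n \<sqsubseteq> b"
      using bleq_trans \<open>n \<sqsubseteq> c\<close> \<open>n \<sqsubseteq> d\<close> that(6,7) by blast+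
    then have "n \<sqsubseteq> m" using that(3) nX unfolding is_meet_def by blast
    then show "n \<sqsubseteq> w" using bleq_trans that(4,5) by blast
  qed
  have "n \<in> meet_filter F G" unfolding meet_filter_def using nX c(1) d(1) n bleq_refl[OF nX] by blast
  moreover have "n \<sqsubseteq> w1" "n \<sqsubseteq> w2" using below w c d by blast+
  ultimately show "\<exists>c\<in>meet_filter F G. c \<sqsubseteq> w1 \<and> c \<sqsubseteq> w2" by blast
next
  fix a b assume "a \<in> meet_filter F G" "b \<in> X" "a \<sqsubseteq> b"
  then show "b \<in> meet_filter F G" unfolding meet_filter_def using bleq_trans by blast
qed

lemma distinct_ultrafilters_separated:
  assumes F: "ultra F" and G: "ultra G" and "F \<noteq> G"
  shows "\<exists>a\<in>F. \<exists>b\<in>G. L a \<inter> L b = {}"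
proof -
  note filters = is_ultrafilter_filter[OF F] is_ultrafilter_filter[OF G]
  have "meet_filter F G = X"
    using is_ultrafilter_maximal[OF F meet_filter_is_filter[OF filters]]
      is_ultrafilter_maximal[OF G meet_filter_is_filter[OF filters]]
      subset_meet_filter[OF filters] \<open>F \<noteq> G\<close> by metis
  moreover obtain z where "z \<in> X" "p z = bot" using fibre_nonempty by blast
  ultimately obtain a b m where abm: "a \<in> F" "b \<in> G" "is_meet X (\<sqsubseteq>) a b m" "m \<sqsubseteq> z"
    unfolding meet_filter_def by blast
  have "p m = bot" using bleq_p[OF abm(4)] \<open>p z = bot\<close> by (simp add: bot_unique)
  have "K \<notin> L a \<inter> L b" for K
  proof
    assume "K \<in> L a \<inter> L b"
    then have K: "ultra K" "a \<in> K" "b \<in> K" unfolding L_def by auto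
    note K_filter = is_ultrafilter_filter[OF K(1)]
    obtain c where c: "c \<in> K" "c \<sqsubseteq> a" "c \<sqsubseteq> b" using is_filter_directed[OF K_filter K(2,3)] by blast
    have "c \<in> X" using c(1) is_filter_subset[OF K_filter] by blast
    then have "c \<sqsubseteq> m" using abm(3) c(2,3) unfolding is_meet_def by blast
    then have "p c = bot" using bleq_p \<open>p m = bot\<close> by (metis bot_unique)
    then show False using ultrafilter_not_bot[OF K(1) c(1)] by blast
  qed
  then show ?thesis using abm(1,2) by blast
qed

lemma Hausdorff_if_meets: "Hausdorff_space dual"
  unfolding Hausdorff_dual_iff using distinct_ultrafilters_separated by blast

end

lemma restr_meet:
  assumes x: "x \<in> X" and "b \<le> p x" "c \<le> p x"
  shows "is_meet X (\<sqsubseteq>) (restr x b) (restr x c) (restr x (inf b c))"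
  unfolding is_meet_def
proof (intro conjI ballI impI)
  have bc: "inf b c \<le> p x" using assms(2) le_infI1 by blast
  show "restr x (inf b c) \<in> X" using restr_in[OF x bc] .
  show "restr x (inf b c) \<sqsubseteq> restr x b" "restr x (inf b c) \<sqsubseteq> restr x c"
    using restr_mono[OF x] assms(2,3) by simp_all
  fix z assume "z \<in> X" and z: "z \<sqsubseteq> restr x b \<and> z \<sqsubseteq> restr x c"
  then have "p z \<le> b" "p z \<le> c" and z_eq: "z = restr (restr x b) (p z)"
    using bleq_iff p_restr[OF x] assms(2,3) by auto
  then have "p z \<le> inf b c" and "z = restr x (p z)"
    using restr_restr[OF x _ assms(2)] by simp_all
  then show "z \<sqsubseteq> restr x (inf b c)"
    unfolding bleq_iff using p_restr[OF x bc] restr_restr[OF x _ bc] by simp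
qed

text \<open>Uniqueness of gluing: the restrictions of u to b and c have a compatible meet, so the
  join axiom provides a common upper bound below u and below v, which must lie in the fibre
  of b \<squnion> c.\<close>
lemma eq_if_restr_eq:
  assumes u: "u \<in> X" and v: "v \<in> X" and "p v = p u" and bc: "sup b c = p u"
    and eq_b: "restr u b = restr v b" and eq_c: "restr u c = restr v c"
  shows "u = v"
proof -
  have b: "b \<le> p u" and c: "c \<le> p u" by (simp_all flip: bc)
  have "is_meet X (\<sqsubseteq>) (restr u b) (restr u c) (restr u (inf b c))"
    using restr_meet[OF u b c] .
  moreover have "p (restr u (inf b c)) = inf (p (restr u b)) (p (restr u c))"
    using p_restr[OF u] b c le_infI1[OF b] by simp
  ultimately obtain j where j: "is_join X (\<sqsubseteq>) (restr u b) (restr u c) j"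
    using compatible_join restr_in[OF u] b c by blast
  have upper_bound: "j \<sqsubseteq> w" if "w \<in> X" "p w = p u" "restr w b = restr u b" "restr w c = restr u c" for w
    using j restr_bleq[of w b] restr_bleq[of w c] that b c unfolding is_join_def by metis
  have "j \<sqsubseteq> u" "j \<sqsubseteq> v" using upper_bound u v assms(3) eq_b eq_c by auto
  moreover have "p u \<le> p j"
    using j bleq_p p_restr[OF u] b c bc unfolding is_join_def by (metis sup_least)
  ultimately have "p j = p u" "p j = p v" using bleq_p assms(3) by (auto intro: order_antisym)
  then show "u = v"
    using \<open>j \<sqsubseteq> u\<close> \<open>j \<sqsubseteq> v\<close> bleq_iff restr_self[OF u] restr_self[OF v] by metis
qed

definition equalizer :: "'x \<Rightarrow> 'x \<Rightarrow> 'b set" where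
  "equalizer x y = {b. b \<le> p x \<and> restr x b = restr y b}"

context
  fixes x y assumes x: "x \<in> X" and y: "y \<in> X" and same_fibre: "p y = p x"
begin

lemma equalizer_down:
  assumes "b \<in> equalizer x y" and "b' \<le> b"
  shows "b' \<in> equalizer x y"
proof -
  have b: "b \<le> p x" "b \<le> p y" and eq: "restr x b = restr y b"
    using assms(1) same_fibre unfolding equalizer_def by auto
  have "restr x b' = restr y b'"
    using restr_restr[OF x assms(2) b(1)] restr_restr[OF y assms(2) b(2)] eq by simp
  then show ?thesis unfolding equalizer_def using assms(2) b(1) by simp
qed

lemma bot_in_equalizer: "bot \<in> equalizer x y"
proof -
  have "restr x bot \<in> X" "restr y bot \<in> X" "p (restr x bot) = bot" "p (restr y bot) = bot"
    using restr_in[OF x] restr_in[OF y] p_restr[OF x] p_restr[OF y] by simp_all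
  then have "restr x bot = restr y bot"
    using bleq_antisym[OF bot_fibre_least bot_fibre_least] by metis
  then show ?thesis unfolding equalizer_def by simp
qed

lemma sup_in_equalizer:
  assumes "d1 \<in> equalizer x y" "d2 \<in> equalizer x y"
  shows "sup d1 d2 \<in> equalizer x y"
proof -
  let ?s = "sup d1 d2"
  have d: "d1 \<le> p x" "d2 \<le> p x" "restr x d1 = restr y d1" "restr x d2 = restr y d2"
    using assms unfolding equalizer_def by auto
  then have s: "?s \<le> p x" and s': "?s \<le> p y" using same_fibre by simp_all
  have "restr x ?s = restr y ?s"
  proof (rule eq_if_restr_eq)
    show "restr x ?s \<in> X" "restr y ?s \<in> X" "p (restr y ?s) = p (restr x ?s)" "sup d1 d2 = p (restr x ?s)"
      using restr_in[OF x s] restr_in[OF y s'] p_restr[OF x s] p_restr[OF y s'] by simp_all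
    show "restr (restr x ?s) d1 = restr (restr y ?s) d1" "restr (restr x ?s) d2 = restr (restr y ?s) d2"
      using restr_restr[OF x _ s] restr_restr[OF y _ s'] d by simp_all
  qed
  then show ?thesis unfolding equalizer_def using s by simp
qed

lemma equal_germs_meet_equalizer:
  assumes "p x \<in> F" and "germ F x = germ F y"
  shows "\<exists>b\<in>F. b \<in> equalizer x y"
proof -
  have "x \<in> germ F y" using self_in_germ[OF x assms(1)] assms(2) by simp
  then obtain b where b: "b \<in> F" "b \<le> p y" "restr y b \<sqsubseteq> x" unfolding germ_def by blast
  then have "restr y b = restr x b" using bleq_iff p_restr[OF y] by metis
  then show ?thesis unfolding equalizer_def using b same_fibre by auto
qed

text \<open>If basic neighbourhoods L a, L a' of the two germs are disjoint, then below the element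
  c \<in> F witnessing both, no nonzero part of the equalizer survives: a prime filter through such
  a part would give a germ of x lying in both L a and L a'.\<close>
lemma separated_germs_annihilate_equalizer:
  assumes Hausdorff: "Hausdorff_space dual" and F: "prime_filter F" "p x \<in> F"
    and "germ F x \<noteq> germ F y"
  shows "\<exists>c\<in>F. \<forall>b\<in>equalizer x y. inf b c = bot"
proof -
  have "ultra (germ F x)" "ultra (germ F y)"
    using germ_ultrafilter[OF F(1) x F(2)] germ_ultrafilter[OF F(1) y] F(2) same_fibre by simp_all
  then obtain a a' where "a \<in> germ F x" "a' \<in> germ F y" and disjoint: "L a \<inter> L a' = {}"
    using Hausdorff \<open>germ F x \<noteq> germ F y\<close> unfolding Hausdorff_dual_iff by blast
  then obtain b b' where b: "b \<in> F" "b \<le> p x" "restr x b \<sqsubseteq> a" "a \<in> X"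
    and b': "b' \<in> F" "b' \<le> p y" "restr y b' \<sqsubseteq> a'" "a' \<in> X"
    unfolding germ_def by blast
  have "inf b0 (inf b b') = bot" if "b0 \<in> equalizer x y" for b0
  proof (rule ccontr)
    let ?g = "inf b0 (inf b b')"
    assume "?g \<noteq> bot"
    then obtain F' where F': "prime_filter F'" "?g \<in> F'" by (rule ex_prime_filter_containing)
    have g: "?g \<le> b" "?g \<le> b'" "?g \<le> b0" by (auto intro: le_infI2)
    then have "?g \<le> p x" using b(2) order_trans by blast
    then have "p x \<in> F'" using prime_filter_upward[OF F'] by blast
    let ?K = "germ F' x"
    have K: "ultra ?K" "restr x ?g \<in> ?K"
      using germ_ultrafilter[OF F'(1) x \<open>p x \<in> F'\<close>] restr_in_germ[OF x F'(2) \<open>?g \<le> p x\<close>] by simp_all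
    have "restr x ?g \<sqsubseteq> a"
      using bleq_trans[OF restr_mono[OF x g(1) b(2)] b(3) b(4)] .
    then have "?K \<in> L a" using L_mono[OF _ b(4)] K unfolding L_def by blast
    have "restr x ?g = restr y ?g"
      using equalizer_down[OF that g(3)] unfolding equalizer_def by simp
    moreover have "restr y ?g \<sqsubseteq> a'"
      using bleq_trans[OF restr_mono[OF y g(2) b'(2)] b'(3) b'(4)] .
    ultimately have "?K \<in> L a'" using L_mono[OF _ b'(4)] K unfolding L_def by auto
    with \<open>?K \<in> L a\<close> show False using disjoint by blast
  qed
  then show ?thesis using prime_filter_inf[OF F(1) b(1) b'(1)] by blast
qed

text \<open>The ideal generated by the equalizer D and its annihilator J contains p x, since a prime
  filter through p x meets D or J by the two lemmas above. So p x \<le> d \<squnion> j with d \<in> D, j \<in> J,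
  and d is the greatest element of D.\<close>
lemma equalizer_greatest:
  assumes Hausdorff: "Hausdorff_space dual"
  shows "\<exists>d\<in>equalizer x y. \<forall>b\<in>equalizer x y. b \<le> d"
proof -
  define D where "D = equalizer x y"
  define J where "J = {j. \<forall>b\<in>D. inf b j = bot}"
  define I where "I = {c. \<exists>d\<in>D. \<exists>j\<in>J. c \<le> sup d j}"
  have "bot \<in> J" unfolding J_def by simp
  have "p x \<in> I"
  proof (rule ccontr)
    assume "p x \<notin> I"
    have I_down: "c' \<in> I" if "c \<in> I" "c' \<le> c" for c c'
      using that order_trans unfolding I_def by blast
    have I_sup: "sup c c' \<in> I" if cc': "c \<in> I" "c' \<in> I" for c c'
    proof -
      obtain d j d' j' where "d \<in> D" "j \<in> J" "c \<le> sup d j" "d' \<in> D" "j' \<in> J" "c' \<le> sup d' j'"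
        using cc' unfolding I_def by blast
      moreover from this have "sup c c' \<le> sup (sup d d') (sup j j')"
        by (meson le_supI order_trans sup_mono sup_ge1 sup_ge2)
      moreover have "sup j j' \<in> J"
        using \<open>j \<in> J\<close> \<open>j' \<in> J\<close> unfolding J_def by (simp add: inf_sup_distrib1)
      ultimately show ?thesis unfolding I_def D_def using sup_in_equalizer by blast
    qed
    have "bot \<in> I" unfolding I_def D_def using bot_in_equalizer \<open>bot \<in> J\<close> bot_least by blast
    obtain F where F: "prime_filter F" "p x \<in> F" and "F \<inter> I = {}"
      by (rule prime_filter_separation[OF I_down I_sup \<open>bot \<in> I\<close> \<open>p x \<notin> I\<close>])
    moreover have "D \<subseteq> I" unfolding I_def using \<open>bot \<in> J\<close> sup_ge1 by blast
    moreover have "J \<subseteq> I" unfolding I_def D_def using bot_in_equalizer sup_ge2 by blast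
    moreover have "(\<exists>b\<in>F. b \<in> D) \<or> (\<exists>c\<in>F. c \<in> J)"
      using equal_germs_meet_equalizer[OF F(2)] separated_germs_annihilate_equalizer[OF Hausdorff F]
      unfolding D_def J_def by blast
    ultimately show False by blast
  qed
  then obtain d j where d: "d \<in> D" and j: "j \<in> J" and cover: "p x \<le> sup d j"
    unfolding I_def by blast
  have "b \<le> d" if "b \<in> D" for b
  proof (rule le_sup_disjoint_imp_le)
    have "b \<le> p x" using that unfolding D_def equalizer_def by simp
    then show "b \<le> sup d j" using cover by (rule order_trans)
    show "inf b j = bot" using j that unfolding J_def by blast
  qed
  then show ?thesis using d unfolding D_def by blast
qed

end

lemma meets_if_Hausdorff:
  assumes Hausdorff: "Hausdorff_space dual" and x0: "x0 \<in> X" and y0: "y0 \<in> X"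
  shows "\<exists>m. is_meet X (\<sqsubseteq>) x0 y0 m"
proof -
  define e where "e = inf (p x0) (p y0)"
  have ex: "e \<le> p x0" and ey: "e \<le> p y0" unfolding e_def by auto
  define x where "x = restr x0 e"
  define y where "y = restr y0 e"
  have x: "x \<in> X" "p x = e" and y: "y \<in> X" "p y = e"
    unfolding x_def y_def using restr_in p_restr x0 y0 ex ey by auto
  obtain d where d: "d \<in> equalizer x y" and greatest: "\<And>b. b \<in> equalizer x y \<Longrightarrow> b \<le> d"
    using equalizer_greatest[OF x(1) y(1) _ Hausdorff] x(2) y(2) by auto
  have de: "d \<le> e" and "restr x d = restr y d" using d x(2) unfolding equalizer_def by auto
  have de': "d \<le> p x" using de x(2) by simp
  have m_x0: "restr x d = restr x0 d" unfolding x_def by (rule restr_restr[OF x0 de ex])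
  have m_y0: "restr x d = restr y0 d"
    using \<open>restr x d = restr y d\<close> restr_restr[OF y0 de ey] unfolding y_def by simp
  have "is_meet X (\<sqsubseteq>) x0 y0 (restr x d)" unfolding is_meet_def
  proof (intro conjI ballI impI)
    show "restr x d \<in> X" using restr_in[OF x(1)] de x(2) by simp
    show "restr x d \<sqsubseteq> x0" using restr_bleq[OF x0 order_trans[OF de ex]] by (simp only: m_x0)
    show "restr x d \<sqsubseteq> y0" using restr_bleq[OF y0 order_trans[OF de ey]] by (simp only: m_y0)
  next
    fix z assume "z \<in> X" "z \<sqsubseteq> x0 \<and> z \<sqsubseteq> y0"
    then have "p z \<le> e" "z = restr x0 (p z)" "z = restr y0 (p z)" unfolding e_def bleq_iff by auto
    then have z: "p z \<le> e" "z = restr x (p z)" "z = restr y (p z)"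
      unfolding x_def y_def using restr_restr x0 y0 ex ey by auto
    then have "p z \<in> equalizer x y" unfolding equalizer_def using x(2) by simp
    then have "p z \<le> d" by (rule greatest)
    then show "z \<sqsubseteq> restr x d"
      unfolding bleq_iff using z restr_restr[OF x(1) _ de'] p_restr[OF x(1) de'] de by simp
  qed
  then show ?thesis by blast
qed

end

theorem proposition3p15:
  fixes X :: "'x set" and p :: "'x \<Rightarrow> 'b::{distrib_lattice,bounded_lattice_bot}"
    and res :: "'b \<Rightarrow> 'b \<Rightarrow> 'x \<Rightarrow> 'x"
  assumes "boolean_set X p res"
  shows "(\<forall>x\<in>X. \<forall>y\<in>X. \<exists>m. is_meet X (bleq p res) x y m)
           \<longleftrightarrow> Hausdorff_space (dual_total_space X p res)"
proof -
  interpret bool_set X p res by (rule bool_set.intro[OF assms])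
  show ?thesis using Hausdorff_if_meets meets_if_Hausdorff by blast
qed

end
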